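(* Let $(\gamma_n)$ be a sequence of positive reals satisfying conditions (C1)–(C7) below, and let $f\in\mathcal{L}$. Then the sequence $\beta_n^f(t)$ converges to a constant function $L$, and the sequence \[ \nu_n^f(t)=\frac{\sum_{k=0}^n |K^k[f(t)]|^2}{\sum_{k=0}^n \frac{1}{\gamma_k}} \] converges to the constant function $L/2$, uniformly on every compact interval.
   Context: Given positive reals $\gamma_n$, set $\gamma_{-1}=1$, $p_{-1}=0$, $p_0=1$ and $\gamma_n p_{n+1}(\omega)=\omega p_n(\omega)-\gamma_{n-1}p_{n-1}(\omega)$ ($n\ge0$). Let $\Delta_n=\gamma_{n+1}-\gamma_n$, $\Delta^2_n=\Delta_{n+1}-\Delta_n$. Conditions: (C1) $\gamma_n\to\infty$; (C2) $\Delta_n\to0$; (C3) there exist $n_0,m_0$ with $\gamma_{n+m}>\gamma_n$ for all $n\ge n_0$, $m\ge m_0$; (C4) $\sum 1/\gamma_j=\infty$; (C5) some $\kappa>1$ has $\sum\gamma_j^{-\kappa}<\infty$; (C6) $\sum|\Delta_n|/\gamma_n^2<\infty$; (C7) $\sum|\Delta^2_n|/\gamma_n<\infty$. $C^\infty_{\mathbb{R}\to\mathbb{C}}$ is the set of functions $\mathbb{R}\to\mathbb{C}$ with infinitely differentiable real and imaginary parts. $K^n_t=(-i)^n p_n\!\left(i\frac{d}{dt}\right)$ (index $t$ may be omitted). $\beta_n^f(t)=\gamma_n(|K^n[f(t)]|^2+|K^{n+1}[f(t)]|^2)$, and $\mathcal{L}$ is the set of $f\in C^\infty_{\mathbb{R}\to\mathbb{C}}$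 for which $\beta_n^f(t)$ converges uniformly on every compact interval. *)

theory Defs
  imports "HOL-Analysis.Analysis" "HOL-Computational_Algebra.Polynomial"
begin

text \<open>Orthonormal polynomials p_n given by the three-term recurrence
  gamma_n p_(n+1) = w p_n - gamma_(n-1) p_(n-1), with p_(-1) = 0, p_0 = 1, gamma_(-1) = 1.\<close>
fun opoly :: "(nat \<Rightarrow> real) \<Rightarrow> nat \<Rightarrow> real poly" where
  "opoly \<gamma> 0 = 1"
| "opoly \<gamma> (Suc 0) = smult (1 / \<gamma> 0) [:0, 1:]"
| "opoly \<gamma> (Suc (Suc n)) =
     smult (1 / \<gamma> (Suc n)) ([:0, 1:] * opoly \<gamma> (Suc n) - smult (\<gamma> n) (opoly \<gamma> n))"

definition cderiv :: "nat \<Rightarrow> (real \<Rightarrow> complex) \<Rightarrow> real \<Rightarrow> complex" where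
  "cderiv k f t = complex_of_real (((deriv ^^ k) (\<lambda>s. Re (f s))) t)
                 + \<i> * complex_of_real (((deriv ^^ k) (\<lambda>s. Im (f s))) t)"

definition smooth_RC :: "(real \<Rightarrow> complex) \<Rightarrow> bool" where
  "smooth_RC f \<longleftrightarrow> (\<forall>k x. ((deriv ^^ k) (\<lambda>s. Re (f s))) differentiable (at x)
                        \<and> ((deriv ^^ k) (\<lambda>s. Im (f s))) differentiable (at x))"

text \<open>K^n = (-i)^n p_n(i d/dt).\<close>
definition Kop :: "(nat \<Rightarrow> real) \<Rightarrow> nat \<Rightarrow> (real \<Rightarrow> complex) \<Rightarrow> real \<Rightarrow> complex" where
  "Kop \<gamma> n f t = (- \<i>) ^ n *
     (\<Sum>k\<le>degree (opoly \<gamma> n). complex_of_real (coeff (opoly \<gamma> n) k) * \<i> ^ k * cderiv k f t)"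

definition beta :: "(nat \<Rightarrow> real) \<Rightarrow> nat \<Rightarrow> (real \<Rightarrow> complex) \<Rightarrow> real \<Rightarrow> real" where
  "beta \<gamma> n f t = \<gamma> n * ((cmod (Kop \<gamma> n f t))\<^sup>2 + (cmod (Kop \<gamma> (Suc n) f t))\<^sup>2)"

definition nu :: "(nat \<Rightarrow> real) \<Rightarrow> nat \<Rightarrow> (real \<Rightarrow> complex) \<Rightarrow> real \<Rightarrow> real" where
  "nu \<gamma> n f t = (\<Sum>k\<le>n. (cmod (Kop \<gamma> k f t))\<^sup>2) / (\<Sum>k\<le>n. 1 / \<gamma> k)"

definition classL :: "(nat \<Rightarrow> real) \<Rightarrow> (real \<Rightarrow> complex) set" where
  "classL \<gamma> = {f. smooth_RC f \<and>
      (\<forall>a b. uniformly_convergent_on {a..b} (\<lambda>n t. beta \<gamma> n f t))}"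

end

theory Submission
  imports Defs
begin

text \<open>The three-term recurrence makes d/dt K^n = \<gamma>_n K^(n+1) - \<gamma>_(n-1) K^(n-1), so the
  derivative of T_N(t) = \<Sum>_(n\<le>N) |K^n(t)|^2 telescopes to 2 \<gamma>_N Re(K^N conj K^(N+1)),
  which is bounded by \<beta>_N. Moreover \<Sum>_(n\<le>N) \<beta>_n / \<gamma>_n = 2 T_N + |K^(N+1)|^2 - |K^0|^2.
  Hence, by the mean value theorem, the partial sums \<Sum>_(n\<le>N) (\<beta>_n(t) - \<beta>_n(s)) / \<gamma>_n stay
  bounded, while the total weight \<Sum>_(n\<le>N) 1 / \<gamma>_n diverges (C4); comparing with the
  weighted Cesaro mean shows that the pointwise limit of \<beta>_n does not depend on t. By the
  same identity, \<nu>_N is half the weighted Cesaro mean of \<beta>_n up to an error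
  O(1) / \<Sum>_(n\<le>N) 1 / \<gamma>_n, so it converges uniformly to half that constant.
  Only positivity, (C1) and (C4) are needed: the other conditions serve to show that \<beta>_n
  converges at all, which membership in classL already assumes.\<close>

definition poly_iD :: "nat \<Rightarrow> (real \<Rightarrow> complex) \<Rightarrow> real poly \<Rightarrow> real \<Rightarrow> complex" where
  "poly_iD j f P t = (\<Sum>k\<le>degree P. complex_of_real (coeff P k) * \<i> ^ k * cderiv (k + j) f t)"

lemma poly_iD_eq_sum_atMost:
  "degree P \<le> M \<Longrightarrow>
     poly_iD j f P t = (\<Sum>k\<le>M. complex_of_real (coeff P k) * \<i> ^ k * cderiv (k + j) f t)"
  unfolding poly_iD_def by (rule sum.mono_neutral_left) (auto simp: coeff_eq_0)

lemma poly_iD_diff: "poly_iD j f (P - Q) t = poly_iD j f P t - poly_iD j f Q t"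
proof -
  let ?M = "max (degree P) (degree Q)"
  have "degree (P - Q) \<le> ?M" by (rule degree_diff_le) auto
  then show ?thesis
    by (simp add: poly_iD_eq_sum_atMost[of _ ?M] sum_subtractf[symmetric] algebra_simps)
qed

lemma poly_iD_smult: "poly_iD j f (smult c P) t = of_real c * poly_iD j f P t"
  by (simp add: poly_iD_eq_sum_atMost[OF degree_smult_le[of c P]]
      poly_iD_eq_sum_atMost[of P "degree P"] sum_distrib_left algebra_simps)

lemma poly_iD_pCons_0: "poly_iD j f (pCons 0 P) t = \<i> * poly_iD (Suc j) f P t"
proof -
  have "poly_iD j f (pCons 0 P) t =
      (\<Sum>k\<le>Suc (degree P). complex_of_real (coeff (pCons 0 P) k) * \<i> ^ k * cderiv (k + j) f t)"
    by (rule poly_iD_eq_sum_atMost[OF degree_pCons_le])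
  also have "\<dots> = (\<Sum>k\<le>degree P. complex_of_real (coeff P k) * \<i> ^ Suc k * cderiv (Suc k + j) f t)"
    by (subst sum.atMost_Suc_shift) simp
  also have "\<dots> = \<i> * poly_iD (Suc j) f P t"
    unfolding poly_iD_def by (simp add: sum_distrib_left algebra_simps)
  finally show ?thesis .
qed

lemma cderiv_has_vector_derivative:
  assumes "smooth_RC f"
  shows "(cderiv k f has_vector_derivative cderiv (Suc k) f t) (at t)"
proof -
  have "((deriv ^^ k) (\<lambda>s. Re (f s)) has_real_derivative (deriv ^^ Suc k) (\<lambda>s. Re (f s)) t) (at t)"
    and "((deriv ^^ k) (\<lambda>s. Im (f s)) has_real_derivative (deriv ^^ Suc k) (\<lambda>s. Im (f s)) t) (at t)"
    using assms unfolding smooth_RC_def by (simp_all add: DERIV_deriv_iff_real_differentiable)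
  then show ?thesis
    unfolding cderiv_def[abs_def]
    by (intro has_vector_derivative_add has_vector_derivative_mult_right has_vector_derivative_of_real)
qed

lemma poly_iD_has_vector_derivative:
  "smooth_RC f \<Longrightarrow> (poly_iD j f P has_vector_derivative poly_iD (Suc j) f P t) (at t)"
  unfolding poly_iD_def[abs_def]
  by (intro has_vector_derivative_sum has_vector_derivative_mult_right)
    (simp add: cderiv_has_vector_derivative)

lemma Kop_eq_poly_iD: "Kop \<gamma> n f t = (- \<i>) ^ n * poly_iD 0 f (opoly \<gamma> n) t"
  by (simp add: Kop_def poly_iD_def)

lemma Kop_has_vector_derivative_poly_iD:
  "smooth_RC f \<Longrightarrow>
     (Kop \<gamma> n f has_vector_derivative (- \<i>) ^ n * poly_iD 1 f (opoly \<gamma> n) t) (at t)"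
  unfolding Kop_eq_poly_iD[abs_def]
  by (intro has_vector_derivative_mult_right) (use poly_iD_has_vector_derivative[of f 0] in simp)

lemma Kop_0_has_vector_derivative:
  assumes "\<gamma> 0 \<noteq> 0" and "smooth_RC f"
  shows "(Kop \<gamma> 0 f has_vector_derivative of_real (\<gamma> 0) * Kop \<gamma> 1 f t) (at t)"
proof -
  have "opoly \<gamma> 1 = smult (1 / \<gamma> 0) (pCons 0 1)" by simp
  then have "Kop \<gamma> 1 f t = - \<i> * (of_real (1 / \<gamma> 0) * (\<i> * poly_iD 1 f 1 t))"
    by (simp only: Kop_eq_poly_iD poly_iD_smult poly_iD_pCons_0 power_one_right One_nat_def power_Suc power_0 mult_1_right)
  then have "of_real (\<gamma> 0) * Kop \<gamma> 1 f t = poly_iD 1 f (opoly \<gamma> 0) t"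
    using assms(1) by (simp add: field_simps)
  then show ?thesis
    using Kop_has_vector_derivative_poly_iD[OF assms(2), of \<gamma> 0] by simp
qed

lemma Kop_Suc_has_vector_derivative:
  assumes "\<gamma> (Suc m) \<noteq> 0" and "smooth_RC f"
  shows "(Kop \<gamma> (Suc m) f has_vector_derivative
           of_real (\<gamma> (Suc m)) * Kop \<gamma> (Suc (Suc m)) f t - of_real (\<gamma> m) * Kop \<gamma> m f t) (at t)"
proof -
  have "opoly \<gamma> (Suc (Suc m)) =
      smult (1 / \<gamma> (Suc m)) (pCons 0 (opoly \<gamma> (Suc m)) - smult (\<gamma> m) (opoly \<gamma> m))"
    by simp
  then have "of_real (\<gamma> (Suc m)) * Kop \<gamma> (Suc (Suc m)) f t - of_real (\<gamma> m) * Kop \<gamma> m f t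
      = (- \<i>) ^ Suc m * poly_iD 1 f (opoly \<gamma> (Suc m)) t"
    using assms(1)
    by (simp add: Kop_eq_poly_iD poly_iD_smult poly_iD_pCons_0 poly_iD_diff algebra_simps
        del: opoly.simps)
  then show ?thesis
    using Kop_has_vector_derivative_poly_iD[OF assms(2), of \<gamma> "Suc m"] by simp
qed

lemma continuous_on_Kop: "smooth_RC f \<Longrightarrow> continuous_on S (Kop \<gamma> n f)"
  by (meson Kop_has_vector_derivative_poly_iD continuous_at_imp_continuous_on
      has_vector_derivative_continuous)

lemma continuous_on_beta: "smooth_RC f \<Longrightarrow> continuous_on S (beta \<gamma> n f)"
  unfolding beta_def[abs_def] by (intro continuous_intros continuous_on_Kop)

definition Ksum :: "(nat \<Rightarrow> real) \<Rightarrow> nat \<Rightarrow> (real \<Rightarrow> complex) \<Rightarrow> real \<Rightarrow> real" where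
  "Ksum \<gamma> N f t = (\<Sum>n\<le>N. (cmod (Kop \<gamma> n f t))\<^sup>2)"

lemma has_real_derivative_norm_power2:
  assumes "(u has_vector_derivative u') (at t)"
  shows "((\<lambda>t. (norm (u t))\<^sup>2) has_real_derivative 2 * inner (u t) u') (at t)"
proof -
  have "((\<lambda>t. inner (u t) (u t)) has_vector_derivative (inner (u t) u' + inner u' (u t))) (at t)"
    by (rule bounded_bilinear.has_vector_derivative[OF bounded_bilinear_inner assms assms])
  then show ?thesis
    by (simp add: power2_norm_eq_inner has_real_derivative_iff_has_vector_derivative
        inner_commute[of u'])
qed

lemma inner_of_real_mult_right: "inner (x::complex) (complex_of_real c * y) = c * inner x y"
  by (simp add: inner_complex_def algebra_simps)

lemma Ksum_has_real_derivative:
  assumes nz: "\<And>n. \<gamma> n \<noteq> 0" and f: "smooth_RC f"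
  shows "(Ksum \<gamma> N f has_real_derivative
           2 * \<gamma> N * inner (Kop \<gamma> N f t) (Kop \<gamma> (Suc N) f t)) (at t)"
proof (induction N)
  case 0
  show ?case
    using has_real_derivative_norm_power2[OF Kop_0_has_vector_derivative[where \<gamma>=\<gamma>, OF nz f]]
    by (simp add: Ksum_def[abs_def] inner_of_real_mult_right mult.assoc)
next
  case (Suc m)
  have "Ksum \<gamma> (Suc m) f = (\<lambda>t. Ksum \<gamma> m f t + (cmod (Kop \<gamma> (Suc m) f t))\<^sup>2)"
    by (simp add: Ksum_def[abs_def])
  then show ?case
    using DERIV_add[OF Suc.IH has_real_derivative_norm_power2[OF Kop_Suc_has_vector_derivative[where \<gamma>=\<gamma> and m=m, OF nz f]]]
    by (simp add: inner_of_real_mult_right inner_diff_right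
        inner_commute[of "Kop \<gamma> (Suc m) f t" "Kop \<gamma> m f t"] algebra_simps)
qed

lemma abs_Ksum_derivative_le_beta:
  assumes "\<gamma> N \<ge> 0"
  shows "\<bar>2 * \<gamma> N * inner (Kop \<gamma> N f t) (Kop \<gamma> (Suc N) f t)\<bar> \<le> beta \<gamma> N f t"
proof -
  let ?a = "cmod (Kop \<gamma> N f t)" and ?b = "cmod (Kop \<gamma> (Suc N) f t)"
  have "\<bar>inner (Kop \<gamma> N f t) (Kop \<gamma> (Suc N) f t)\<bar> \<le> ?a * ?b" by (rule Cauchy_Schwarz_ineq2)
  moreover have "2 * (?a * ?b) \<le> ?a\<^sup>2 + ?b\<^sup>2" using sum_squares_bound[of ?a ?b] by simp
  ultimately have "2 * \<bar>inner (Kop \<gamma> N f t) (Kop \<gamma> (Suc N) f t)\<bar> \<le> ?a\<^sup>2 + ?b\<^sup>2" by linarith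
  then have "\<gamma> N * (2 * \<bar>inner (Kop \<gamma> N f t) (Kop \<gamma> (Suc N) f t)\<bar>) \<le> \<gamma> N * (?a\<^sup>2 + ?b\<^sup>2)"
    by (rule mult_left_mono[OF _ assms])
  then show ?thesis using assms by (simp add: beta_def abs_mult)
qed

lemma abs_Ksum_diff_le:
  assumes pos: "\<And>n. \<gamma> n > 0" and f: "smooth_RC f" and "s < t"
    and M: "\<And>x. x \<in> {s..t} \<Longrightarrow> beta \<gamma> N f x \<le> M"
  shows "\<bar>Ksum \<gamma> N f t - Ksum \<gamma> N f s\<bar> \<le> (t - s) * M"
proof -
  have nz: "\<gamma> n \<noteq> 0" for n using pos[of n] by simp
  obtain z where z: "s < z" "z < t" and eq: "Ksum \<gamma> N f t - Ksum \<gamma> N f s =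
      (t - s) * (2 * \<gamma> N * inner (Kop \<gamma> N f z) (Kop \<gamma> (Suc N) f z))"
    using MVT2[OF \<open>s < t\<close> Ksum_has_real_derivative[where \<gamma>=\<gamma> and N=N, OF nz f]] by blast
  have "\<bar>2 * \<gamma> N * inner (Kop \<gamma> N f z) (Kop \<gamma> (Suc N) f z)\<bar> \<le> M"
    using abs_Ksum_derivative_le_beta[of \<gamma> N f z] pos[of N] M[of z] z by auto
  then show ?thesis
    unfolding eq using \<open>s < t\<close> by (simp add: abs_mult mult_left_mono)
qed

lemma sum_beta_div_gamma:
  assumes "\<And>n. \<gamma> n \<noteq> 0"
  shows "(\<Sum>n\<le>N. beta \<gamma> n f t / \<gamma> n) =
           2 * Ksum \<gamma> N f t + (cmod (Kop \<gamma> (Suc N) f t))\<^sup>2 - (cmod (Kop \<gamma> 0 f t))\<^sup>2"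
  by (induction N) (simp_all add: beta_def Ksum_def assms)

lemma nu_eq_weighted_mean_beta:
  assumes "\<And>n. \<gamma> n \<noteq> 0"
  shows "nu \<gamma> N f t =
    ((\<Sum>n\<le>N. 1 / \<gamma> n * beta \<gamma> n f t) / (\<Sum>n\<le>N. 1 / \<gamma> n)
     - ((cmod (Kop \<gamma> (Suc N) f t))\<^sup>2 - (cmod (Kop \<gamma> 0 f t))\<^sup>2) / (\<Sum>n\<le>N. 1 / \<gamma> n)) / 2"
proof -
  have "(\<Sum>n\<le>N. 1 / \<gamma> n * beta \<gamma> n f t) =
      2 * Ksum \<gamma> N f t + (cmod (Kop \<gamma> (Suc N) f t))\<^sup>2 - (cmod (Kop \<gamma> 0 f t))\<^sup>2"
    using sum_beta_div_gamma[OF assms] by simp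
  then show ?thesis
    by (simp add: nu_def Ksum_def diff_divide_distrib[symmetric])
qed

lemma norm_Kop_Suc_power2_le_beta:
  assumes "1 \<le> \<gamma> N"
  shows "(cmod (Kop \<gamma> (Suc N) f t))\<^sup>2 \<le> beta \<gamma> N f t"
proof -
  have "(cmod (Kop \<gamma> (Suc N) f t))\<^sup>2 \<le> \<gamma> N * (cmod (Kop \<gamma> (Suc N) f t))\<^sup>2"
    using assms by (simp add: mult_le_cancel_right1)
  also have "\<dots> \<le> beta \<gamma> N f t"
    unfolding beta_def using assms by (intro mult_left_mono) auto
  finally show ?thesis .
qed

lemma filterlim_partial_sums_at_top:
  fixes w :: "nat \<Rightarrow> real"
  assumes nonneg: "\<And>n. w n \<ge> 0" and "\<not> summable w"
  shows "filterlim (\<lambda>N. \<Sum>n\<le>N. w n) at_top sequentially"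
  unfolding filterlim_at_top eventually_sequentially
proof
  fix Z
  obtain n where n: "(\<Sum>i<n. w i) > Z"
    using \<open>\<not> summable w\<close> summableI_nonneg_bounded[of w Z] nonneg by (meson not_less)
  have "Z \<le> (\<Sum>i\<le>m. w i)" if "n \<le> m" for m
    using n sum_mono2[of "{..m}" "{..<n}" w] that nonneg by force
  then show "\<exists>N. \<forall>m\<ge>N. Z \<le> (\<Sum>n\<le>m. w n)" by blast
qed

lemma abs_weighted_sum_le:
  fixes w x :: "nat \<Rightarrow> real"
  assumes w: "\<And>n. w n \<ge> 0" and x: "\<And>n. N0 \<le> n \<Longrightarrow> \<bar>x n\<bar> \<le> e" and "N0 \<le> N"
  shows "\<bar>\<Sum>n\<le>N. w n * x n\<bar> \<le> (\<Sum>n<N0. w n * \<bar>x n\<bar>) + e * (\<Sum>n\<le>N. w n)"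
proof -
  have split: "{..N} = {..<N0} \<union> {N0..N}" using \<open>N0 \<le> N\<close> by auto
  have "e \<ge> 0" using x[of N] \<open>N0 \<le> N\<close> by simp
  have "\<bar>\<Sum>n\<le>N. w n * x n\<bar> \<le> (\<Sum>n\<le>N. w n * \<bar>x n\<bar>)"
    using sum_abs[of "\<lambda>n. w n * x n" "{..N}"] w by (simp add: abs_mult)
  also have "\<dots> = (\<Sum>n<N0. w n * \<bar>x n\<bar>) + (\<Sum>n=N0..N. w n * \<bar>x n\<bar>)"
    unfolding split by (rule sum.union_disjoint) auto
  also have "(\<Sum>n=N0..N. w n * \<bar>x n\<bar>) \<le> (\<Sum>n=N0..N. w n * e)"
    using w x by (intro sum_mono mult_left_mono) auto
  also have "\<dots> = e * (\<Sum>n=N0..N. w n)"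
    by (simp add: sum_distrib_left mult.commute)
  also have "\<dots> \<le> e * (\<Sum>n\<le>N. w n)"
    using w \<open>e \<ge> 0\<close> by (intro mult_left_mono sum_mono2) auto
  finally show ?thesis by simp
qed

lemma uniform_limit_weighted_mean:
  fixes w :: "nat \<Rightarrow> real" and F :: "nat \<Rightarrow> 'a \<Rightarrow> real"
  assumes w: "\<And>n. w n \<ge> 0" and W: "filterlim (\<lambda>N. \<Sum>n\<le>N. w n) at_top sequentially"
    and lim: "uniform_limit S F g sequentially"
    and bdd: "\<And>n. bounded ((\<lambda>t. F n t - g t) ` S)"
  shows "uniform_limit S (\<lambda>N t. (\<Sum>n\<le>N. w n * F n t) / (\<Sum>n\<le>N. w n)) g sequentially"
proof (rule uniform_limitI)
  fix e :: real assume e: "e > 0"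
  obtain N0 where N0: "\<forall>n\<ge>N0. \<forall>t\<in>S. dist (F n t) (g t) < e / 2"
    using uniform_limitD[OF lim, of "e / 2"] e unfolding eventually_sequentially by auto
  obtain B where B: "\<And>n t. t \<in> S \<Longrightarrow> \<bar>F n t - g t\<bar> \<le> B n"
    using bdd unfolding bounded_iff by (metis imageI real_norm_def)
  define C where "C = (\<Sum>n<N0. w n * B n)"
  have "\<forall>\<^sub>F N in sequentially. 2 * \<bar>C\<bar> / e + 1 \<le> (\<Sum>n\<le>N. w n)"
    using W unfolding filterlim_at_top by blast
  from this eventually_ge_at_top[of N0]
  have "\<forall>\<^sub>F N in sequentially. 2 * \<bar>C\<bar> / e + 1 \<le> (\<Sum>n\<le>N. w n) \<and> N0 \<le> N"
    by (rule eventually_conj)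
  then show "\<forall>\<^sub>F N in sequentially. \<forall>t\<in>S.
      dist ((\<Sum>n\<le>N. w n * F n t) / (\<Sum>n\<le>N. w n)) (g t) < e"
  proof (rule eventually_mono, intro ballI)
    fix N t assume N: "2 * \<bar>C\<bar> / e + 1 \<le> (\<Sum>n\<le>N. w n) \<and> N0 \<le> N" and t: "t \<in> S"
    define W where "W = (\<Sum>n\<le>N. w n)"
    have "0 \<le> 2 * \<bar>C\<bar> / e" using e by simp
    then have "W > 0" and "2 * \<bar>C\<bar> / e < W" using N unfolding W_def by linarith+
    then have CW: "2 * \<bar>C\<bar> < e * W" using e by (simp add: pos_divide_less_eq mult.commute)
    have "\<bar>\<Sum>n\<le>N. w n * (F n t - g t)\<bar> \<le> (\<Sum>n<N0. w n * \<bar>F n t - g t\<bar>) + e / 2 * W"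
      unfolding W_def using N N0 t
      by (intro abs_weighted_sum_le w) (auto simp: dist_real_def less_imp_le)
    also have "(\<Sum>n<N0. w n * \<bar>F n t - g t\<bar>) \<le> C"
      unfolding C_def using w B[OF t] by (intro sum_mono mult_left_mono) auto
    finally have "\<bar>\<Sum>n\<le>N. w n * (F n t - g t)\<bar> < e * W" using CW by linarith
    moreover have "(\<Sum>n\<le>N. w n * F n t) / W - g t = (\<Sum>n\<le>N. w n * (F n t - g t)) / W"
      using \<open>W > 0\<close>
      by (simp add: W_def field_simps sum_subtractf sum_distrib_left right_diff_distrib)
    ultimately show "dist ((\<Sum>n\<le>N. w n * F n t) / (\<Sum>n\<le>N. w n)) (g t) < e"
      using \<open>W > 0\<close> by (simp add: W_def[symmetric] dist_real_def abs_divide divide_less_eq)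
  qed
qed

lemma uniform_limit_divide_at_top:
  fixes h :: "'i \<Rightarrow> 'a \<Rightarrow> real"
  assumes h: "\<forall>\<^sub>F N in F. \<forall>t\<in>S. \<bar>h N t\<bar> \<le> B" and W: "filterlim W at_top F"
  shows "uniform_limit S (\<lambda>N t. h N t / W N) (\<lambda>t. 0) F"
proof (rule uniform_limitI)
  fix e :: real assume "e > 0"
  have "\<forall>\<^sub>F N in F. \<bar>B\<bar> / e + 1 \<le> W N" using W unfolding filterlim_at_top by blast
  with h show "\<forall>\<^sub>F N in F. \<forall>t\<in>S. dist (h N t / W N) 0 < e"
  proof eventually_elim
    case (elim N)
    have "0 \<le> \<bar>B\<bar> / e" using \<open>e > 0\<close> by simp
    then have "W N > 0" and "\<bar>B\<bar> / e < W N" using elim(2) by linarith+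
    then have "\<bar>B\<bar> < W N * e" using \<open>e > 0\<close> by (simp add: pos_divide_less_eq)
    show ?case
    proof
      fix t assume "t \<in> S"
      then have "\<bar>h N t\<bar> < W N * e" using elim(1) \<open>\<bar>B\<bar> < W N * e\<close> by fastforce
      then show "dist (h N t / W N) 0 < e"
        using \<open>W N > 0\<close> by (simp add: abs_divide pos_divide_less_eq mult.commute)
    qed
  qed
qed

lemma uniform_limit_eventually_bounded:
  fixes F :: "'i \<Rightarrow> 'a \<Rightarrow> 'b::real_normed_vector"
  assumes lim: "uniform_limit S F g net" and "bounded (g ` S)"
  shows "\<exists>B. \<forall>\<^sub>F n in net. \<forall>t\<in>S. norm (F n t) \<le> B"
proof -
  obtain B where B: "\<And>t. t \<in> S \<Longrightarrow> norm (g t) \<le> B"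
    using \<open>bounded (g ` S)\<close> unfolding bounded_iff by blast
  have "\<forall>\<^sub>F n in net. \<forall>t\<in>S. norm (F n t) \<le> B + 1"
    using uniform_limitD[OF lim zero_less_one]
  proof (rule eventually_mono, intro ballI)
    fix n t assume "\<forall>t\<in>S. dist (F n t) (g t) < 1" and t: "t \<in> S"
    moreover have "norm (F n t) \<le> norm (g t) + dist (F n t) (g t)"
      by (simp add: dist_norm norm_triangle_sub)
    ultimately show "norm (F n t) \<le> B + 1" using B[OF t] by fastforce
  qed
  then show ?thesis by blast
qed

lemma beta_eventually_bounded:
  assumes f: "smooth_RC f" and uc: "uniformly_convergent_on {a..b} (\<lambda>n t. beta \<gamma> n f t)"
  shows "\<exists>M. \<forall>\<^sub>F n in sequentially. \<forall>t\<in>{a..b}. beta \<gamma> n f t \<le> M"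
proof -
  obtain l where l: "uniform_limit {a..b} (\<lambda>n t. beta \<gamma> n f t) l sequentially"
    using uc unfolding uniformly_convergent_on_def by blast
  have "bounded (beta \<gamma> n f ` {a..b})" for n
    by (intro compact_imp_bounded compact_continuous_image continuous_on_beta[OF f] compact_Icc)
  then have "bounded (l ` {a..b})" by (intro uniform_limit_bounded[OF l]) auto
  then obtain M where "\<forall>\<^sub>F n in sequentially. \<forall>t\<in>{a..b}. norm (beta \<gamma> n f t) \<le> M"
    using uniform_limit_eventually_bounded[OF l] by blast
  then have "\<forall>\<^sub>F n in sequentially. \<forall>t\<in>{a..b}. beta \<gamma> n f t \<le> M"
    by (rule eventually_mono) (auto intro: order.trans[OF abs_ge_self])
  then show ?thesis by blast
qed

lemma Kop_boundary_eventually_bounded: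
  assumes pos: "\<And>n. \<gamma> n > 0" and C1: "filterlim \<gamma> at_top sequentially"
    and f: "smooth_RC f" and uc: "uniformly_convergent_on {a..b} (\<lambda>n t. beta \<gamma> n f t)"
  shows "\<exists>B. \<forall>\<^sub>F N in sequentially. \<forall>t\<in>{a..b}.
           \<bar>(cmod (Kop \<gamma> (Suc N) f t))\<^sup>2 - (cmod (Kop \<gamma> 0 f t))\<^sup>2\<bar> \<le> B"
proof -
  obtain M where M: "\<forall>\<^sub>F N in sequentially. \<forall>t\<in>{a..b}. beta \<gamma> N f t \<le> M"
    using beta_eventually_bounded[OF f uc] by blast
  have "bounded ((\<lambda>t. (cmod (Kop \<gamma> 0 f t))\<^sup>2) ` {a..b})"
    by (intro compact_imp_bounded compact_continuous_image continuous_intros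
        continuous_on_Kop[OF f] compact_Icc)
  then obtain B0 where B0: "\<And>t. t \<in> {a..b} \<Longrightarrow> (cmod (Kop \<gamma> 0 f t))\<^sup>2 \<le> B0"
    unfolding bounded_iff by force
  have "\<forall>\<^sub>F N in sequentially. 1 \<le> \<gamma> N" using C1 unfolding filterlim_at_top by blast
  with M have "\<forall>\<^sub>F N in sequentially. \<forall>t\<in>{a..b}.
      \<bar>(cmod (Kop \<gamma> (Suc N) f t))\<^sup>2 - (cmod (Kop \<gamma> 0 f t))\<^sup>2\<bar> \<le> M + B0"
  proof eventually_elim
    case (elim N)
    show ?case
    proof
      fix t assume t: "t \<in> {a..b}"
      have "(cmod (Kop \<gamma> (Suc N) f t))\<^sup>2 \<le> M"
        using norm_Kop_Suc_power2_le_beta[of \<gamma> N, OF elim(2)] elim(1) t by (meson order.trans)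
      then show "\<bar>(cmod (Kop \<gamma> (Suc N) f t))\<^sup>2 - (cmod (Kop \<gamma> 0 f t))\<^sup>2\<bar> \<le> M + B0"
        using B0[OF t] by (smt (verit) zero_le_power2)
    qed
  qed
  then show ?thesis by blast
qed

lemma beta_limits_eq:
  assumes pos: "\<And>n. \<gamma> n > 0" and C1: "filterlim \<gamma> at_top sequentially"
    and W: "filterlim (\<lambda>N. \<Sum>n\<le>N. 1 / \<gamma> n) at_top sequentially"
    and f: "smooth_RC f" and uc: "uniformly_convergent_on {s..t} (\<lambda>n t. beta \<gamma> n f t)"
    and "s < t" and ls: "(\<lambda>n. beta \<gamma> n f s) \<longlonglongrightarrow> ls" and lt: "(\<lambda>n. beta \<gamma> n f t) \<longlonglongrightarrow> lt"
  shows "ls = lt"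
proof -
  have nz: "\<gamma> n \<noteq> 0" for n using pos[of n] by simp
  define D where "D N = (\<Sum>n\<le>N. 1 / \<gamma> n * (beta \<gamma> n f t - beta \<gamma> n f s))" for N
  have "uniform_limit {t} (\<lambda>N x. D N / (\<Sum>n\<le>N. 1 / \<gamma> n)) (\<lambda>x. lt - ls) sequentially"
    unfolding D_def using pos
    by (intro uniform_limit_weighted_mean[OF _ W]) (auto intro: tendsto_diff ls lt less_imp_le)
  then have mean: "(\<lambda>N. D N / (\<Sum>n\<le>N. 1 / \<gamma> n)) \<longlonglongrightarrow> lt - ls" by simp
  obtain M where M: "\<forall>\<^sub>F N in sequentially. \<forall>x\<in>{s..t}. beta \<gamma> N f x \<le> M"
    using beta_eventually_bounded[OF f uc] by blast
  obtain B where B: "\<forall>\<^sub>F N in sequentially. \<forall>x\<in>{s..t}.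
      \<bar>(cmod (Kop \<gamma> (Suc N) f x))\<^sup>2 - (cmod (Kop \<gamma> 0 f x))\<^sup>2\<bar> \<le> B"
    using Kop_boundary_eventually_bounded[where \<gamma>=\<gamma>, OF pos C1 f uc] by blast
  from M B have "\<forall>\<^sub>F N in sequentially. \<forall>x\<in>{t}. \<bar>D N\<bar> \<le> 2 * ((t - s) * M) + 2 * B"
  proof eventually_elim
    case (elim N)
    have st: "s \<in> {s..t}" "t \<in> {s..t}" using \<open>s < t\<close> by auto
    have "D N = 2 * (Ksum \<gamma> N f t - Ksum \<gamma> N f s)
        + ((cmod (Kop \<gamma> (Suc N) f t))\<^sup>2 - (cmod (Kop \<gamma> 0 f t))\<^sup>2)
        - ((cmod (Kop \<gamma> (Suc N) f s))\<^sup>2 - (cmod (Kop \<gamma> 0 f s))\<^sup>2)"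
      using sum_beta_div_gamma[where \<gamma>=\<gamma> and N=N and t=t, OF nz]
        sum_beta_div_gamma[where \<gamma>=\<gamma> and N=N and t=s, OF nz]
      by (simp add: D_def sum_subtractf right_diff_distrib)
    moreover have "\<bar>Ksum \<gamma> N f t - Ksum \<gamma> N f s\<bar> \<le> (t - s) * M"
      using elim(1) by (intro abs_Ksum_diff_le[where \<gamma>=\<gamma>, OF pos f \<open>s < t\<close>]) auto
    moreover have "\<bar>(cmod (Kop \<gamma> (Suc N) f x))\<^sup>2 - (cmod (Kop \<gamma> 0 f x))\<^sup>2\<bar> \<le> B" if "x \<in> {s..t}" for x
      using elim(2) that by blast
    ultimately have "\<bar>D N\<bar> \<le> 2 * ((t - s) * M) + 2 * B"
      using st by (smt (verit))
    then show ?case by simp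
  qed
  then have "uniform_limit {t} (\<lambda>N x. D N / (\<Sum>n\<le>N. 1 / \<gamma> n)) (\<lambda>x. 0) sequentially"
    by (rule uniform_limit_divide_at_top[OF _ W])
  then have "(\<lambda>N. D N / (\<Sum>n\<le>N. 1 / \<gamma> n)) \<longlonglongrightarrow> 0" by simp
  with mean show ?thesis using LIMSEQ_unique by fastforce
qed

lemma beta_tendsto_const:
  assumes pos: "\<And>n. \<gamma> n > 0" and C1: "filterlim \<gamma> at_top sequentially"
    and C4: "\<not> summable (\<lambda>j. 1 / \<gamma> j)" and f: "f \<in> classL \<gamma>"
  shows "\<exists>L. \<forall>t. (\<lambda>n. beta \<gamma> n f t) \<longlonglongrightarrow> L"
proof -
  have sm: "smooth_RC f" and uc: "\<And>a b. uniformly_convergent_on {a..b} (\<lambda>n t. beta \<gamma> n f t)"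
    using f by (simp_all add: classL_def)
  have W: "filterlim (\<lambda>N. \<Sum>n\<le>N. 1 / \<gamma> n) at_top sequentially"
    using pos C4 by (intro filterlim_partial_sums_at_top) (auto intro: less_imp_le)
  have lim: "(\<lambda>n. beta \<gamma> n f t) \<longlonglongrightarrow> lim (\<lambda>n. beta \<gamma> n f t)" for t
    using uc[of t t] by (simp add: uniformly_convergent_on_singleton convergent_LIMSEQ_iff)
  have "lim (\<lambda>n. beta \<gamma> n f s) = lim (\<lambda>n. beta \<gamma> n f t)" if "s < t" for s t
    using beta_limits_eq[where \<gamma>=\<gamma>, OF pos C1 W sm uc that lim lim] .
  then have "lim (\<lambda>n. beta \<gamma> n f t) = lim (\<lambda>n. beta \<gamma> n f 0)" for t
    by (cases t "0::real" rule: linorder_cases) auto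
  then show ?thesis using lim by metis
qed

theorem lemma29:
  fixes \<gamma> :: "nat \<Rightarrow> real" and f :: "real \<Rightarrow> complex"
  assumes pos: "\<And>n. \<gamma> n > 0"
    and C1: "filterlim \<gamma> at_top sequentially"
    and C2: "(\<lambda>n. \<gamma> (Suc n) - \<gamma> n) \<longlonglongrightarrow> 0"
    and C3: "\<exists>n0 m0. \<forall>n\<ge>n0. \<forall>m\<ge>m0. \<gamma> (n + m) > \<gamma> n"
    and C4: "\<not> summable (\<lambda>j. 1 / \<gamma> j)"
    and C5: "\<exists>\<kappa>>1. summable (\<lambda>j. \<gamma> j powr (- \<kappa>))"
    and C6: "summable (\<lambda>n. \<bar>\<gamma> (Suc n) - \<gamma> n\<bar> / (\<gamma> n)\<^sup>2)"
    and C7: "summable (\<lambda>n. \<bar>(\<gamma> (Suc (Suc n)) - \<gamma> (Suc n)) - (\<gamma> (Suc n) - \<gamma> n)\<bar> / \<gamma> n)"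
    and f: "f \<in> classL \<gamma>"
  shows "\<exists>L::real. \<forall>a b.
           uniform_limit {a..b} (\<lambda>n t. beta \<gamma> n f t) (\<lambda>t. L) sequentially \<and>
           uniform_limit {a..b} (\<lambda>n t. nu \<gamma> n f t) (\<lambda>t. L / 2) sequentially"
proof -
  have sm: "smooth_RC f" and uc: "\<And>a b. uniformly_convergent_on {a..b} (\<lambda>n t. beta \<gamma> n f t)"
    using f by (simp_all add: classL_def)
  have nz: "\<gamma> n \<noteq> 0" for n using pos[of n] by simp
  have W: "filterlim (\<lambda>N. \<Sum>n\<le>N. 1 / \<gamma> n) at_top sequentially"
    using pos C4 by (intro filterlim_partial_sums_at_top) (auto intro: less_imp_le)
  obtain L where L: "\<And>t. (\<lambda>n. beta \<gamma> n f t) \<longlonglongrightarrow> L"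
    using beta_tendsto_const[where \<gamma>=\<gamma>, OF pos C1 C4 f] by blast
  show ?thesis
  proof (intro exI[of _ L] allI conjI)
    fix a b :: real
    show beta: "uniform_limit {a..b} (\<lambda>n t. beta \<gamma> n f t) (\<lambda>t. L) sequentially"
      using uc[of a b] L limI[OF L] by (simp add: uniformly_convergent_uniform_limit_iff)
    have "uniform_limit {a..b} (\<lambda>N t. (\<Sum>n\<le>N. 1 / \<gamma> n * beta \<gamma> n f t) / (\<Sum>n\<le>N. 1 / \<gamma> n))
        (\<lambda>t. L) sequentially"
      using pos by (intro uniform_limit_weighted_mean[OF _ W beta] compact_imp_bounded
          compact_continuous_image continuous_intros continuous_on_beta[OF sm] compact_Icc)
        (auto intro: less_imp_le)
    moreover obtain B where "\<forall>\<^sub>F N in sequentially. \<forall>t\<in>{a..b}.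
        \<bar>(cmod (Kop \<gamma> (Suc N) f t))\<^sup>2 - (cmod (Kop \<gamma> 0 f t))\<^sup>2\<bar> \<le> B"
      using Kop_boundary_eventually_bounded[where \<gamma>=\<gamma>, OF pos C1 sm uc] by blast
    note uniform_limit_divide_at_top[OF this W]
    ultimately have "uniform_limit {a..b} (\<lambda>N t. nu \<gamma> N f t) (\<lambda>t. (L - 0) / 2) sequentially"
      unfolding nu_eq_weighted_mean_beta[where \<gamma>=\<gamma>, OF nz]
      by (intro bounded_linear.uniform_limit[OF bounded_linear_divide] uniform_limit_minus)
    then show "uniform_limit {a..b} (\<lambda>n t. nu \<gamma> n f t) (\<lambda>t. L / 2) sequentially" by simp
  qed
qed

end
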